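(* Let $G$ be a graph on $n$ vertices with maximum vertex degree $\Delta$, and let $\epsilon\in(0,1)$. Sample $B=(1-\epsilon)\frac{n}{\Delta}$ vertices of $G$ uniformly at random, either with replacement or without replacement, and let $G'$ be the subgraph of $G$ induced by the sampled vertices. Then, with high probability, the largest connected component of $G'$ has size at most $O\!\left(\frac{\log n}{\epsilon^2}\right)$.
   Context: "With high probability" means with probability tending to $1$ as $n\to\infty$ (at least $1-n^{-\zeta}$ for a constant $\zeta$). *)

theory Defs
  imports "HOL-Probability.Probability"
begin

definition is_graph :: "nat set \<Rightarrow> (nat \<Rightarrow> nat \<Rightarrow> bool) \<Rightarrow> bool" where
  "is_graph V E \<longleftrightarrow> finite V \<and> (\<forall>x y. E x y \<longrightarrow> x \<in> V \<and> y \<in> V \<and> x \<noteq> y \<and> E y x)"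

definition max_degree :: "nat set \<Rightarrow> (nat \<Rightarrow> nat \<Rightarrow> bool) \<Rightarrow> nat" where
  "max_degree V E = Max (insert 0 ((\<lambda>v. card {u \<in> V. E v u}) ` V))"

definition induced_reach :: "(nat \<Rightarrow> nat \<Rightarrow> bool) \<Rightarrow> nat set \<Rightarrow> nat \<Rightarrow> nat \<Rightarrow> bool" where
  "induced_reach E S = (\<lambda>x y. x \<in> S \<and> y \<in> S \<and> E x y)\<^sup>*\<^sup>*"

definition induced_component :: "(nat \<Rightarrow> nat \<Rightarrow> bool) \<Rightarrow> nat set \<Rightarrow> nat \<Rightarrow> nat set" where
  "induced_component E S v = {u \<in> S. induced_reach E S v u}"

definition largest_component_size :: "(nat \<Rightarrow> nat \<Rightarrow> bool) \<Rightarrow> nat set \<Rightarrow> nat" where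
  "largest_component_size E S = Max (insert 0 ((\<lambda>v. card (induced_component E S v)) ` S))"

definition sample_size :: "nat \<Rightarrow> nat \<Rightarrow> real \<Rightarrow> nat" where
  "sample_size n \<Delta> \<epsilon> = nat \<lfloor>(1 - \<epsilon>) * real n / real \<Delta>\<rfloor>"

end

theory Submission
  imports Defs
begin

text \<open>
  First sample every vertex independently with probability p = (1 - e)/D. Exploring the
  component of a vertex, every newly reached vertex has at most D - 1 unexplored neighbours,
  each sampled with probability p, so the component size is dominated by the total progeny of
  a subcritical branching process. Its exponential moment at x = 1 + e^2/8 is at most 2, and
  Markov's inequality with a union bound over the start vertex bounds the probability of a
  component larger than K by 2n exp (-K e^2/16).

  Containing a component larger than K is an upward-closed property, so the probability that
  a uniform j-subset has it is nondecreasing in j. The number of Bernoulli-sampled vertices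
  equals some m \<ge> B with probability at least 1/(n+1), and given that number the sample is a
  uniform m-subset, so a uniform B-subset is bad with probability at most n + 1 times the
  Bernoulli bound. Sampling with replacement is no worse:
  conditioned on its size j \<le> B, the set of sampled vertices is a uniform j-subset.
\<close>

section \<open>Reachability inside a vertex sample\<close>

definition reached_from :: "(nat \<Rightarrow> nat \<Rightarrow> bool) \<Rightarrow> nat set \<Rightarrow> nat set \<Rightarrow> nat set" where
  "reached_from E S U = {y \<in> S. \<exists>u\<in>U. induced_reach E S u y}"

lemma induced_reach_refl [simp]: "induced_reach E S a a"
  unfolding induced_reach_def by simp

lemma induced_reach_outside: "induced_reach E S u y \<Longrightarrow> u \<notin> S \<Longrightarrow> y = u"
  unfolding induced_reach_def by (induction rule: converse_rtranclp_induct) auto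

lemma induced_reach_mono: "induced_reach E S a b \<Longrightarrow> S \<subseteq> T \<Longrightarrow> induced_reach E T a b"
  unfolding induced_reach_def
  by (induction rule: rtranclp_induct) (auto intro: rtranclp.rtrancl_into_rtrancl)

lemma induced_reach_snoc:
  "induced_reach E S a b \<Longrightarrow> b \<in> S \<Longrightarrow> c \<in> S \<Longrightarrow> E b c \<Longrightarrow> induced_reach E S a c"
  unfolding induced_reach_def by (auto intro: rtranclp.rtrancl_into_rtrancl)

lemma induced_reach_cons:
  "induced_reach E S b c \<Longrightarrow> a \<in> S \<Longrightarrow> b \<in> S \<Longrightarrow> E a b \<Longrightarrow> induced_reach E S a c"
  unfolding induced_reach_def by (auto intro: converse_rtranclp_into_rtranclp)

lemma induced_component_eq_reached_from: "induced_component E S v = reached_from E S {v}"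
  unfolding induced_component_def reached_from_def by auto

lemma reached_from_subset: "reached_from E S U \<subseteq> S"
  unfolding reached_from_def by auto

lemma reached_from_Diff_outside: "u \<notin> S \<Longrightarrow> reached_from E S (U - {u}) = reached_from E S U"
  unfolding reached_from_def using induced_reach_outside by fastforce

lemma reached_from_insert:
  assumes "S \<subseteq> W" "u \<notin> W" "u \<in> U"
  shows "reached_from E (insert u S) U = insert u (reached_from E S (U - {u} \<union> {z\<in>W. E u z}))"
    (is "?L = insert u (reached_from E S ?U')")
proof
  show "?L \<subseteq> insert u (reached_from E S ?U')"
  proof
    fix y assume "y \<in> ?L"
    then obtain a where a: "a \<in> U" "induced_reach E (insert u S) a y" "y \<in> insert u S"
      unfolding reached_from_def by auto
    have "y \<in> insert u S \<longrightarrow> y \<in> insert u (reached_from E S ?U')"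
      using a(2) unfolding induced_reach_def
    proof (induction rule: rtranclp_induct)
      case base
      show ?case
      proof
        assume "a \<in> insert u S"
        show "a \<in> insert u (reached_from E S ?U')"
        proof (cases "a = u")
          case False
          then have "a \<in> ?U'" "a \<in> S" using a(1) \<open>a \<in> insert u S\<close> by auto
          then show ?thesis unfolding reached_from_def using induced_reach_refl by blast
        qed simp
      qed
    next
      case (step y z)
      show ?case
      proof
        assume z: "z \<in> insert u S"
        have y: "y \<in> insert u (reached_from E S ?U')" "E y z" using step by auto
        show "z \<in> insert u (reached_from E S ?U')"
        proof (cases "z = u")
          case False
          with z have "z \<in> S" by simp
          show ?thesis
          proof (cases "y = u")
            case True
            then have "z \<in> ?U'" using y(2) \<open>z \<in> S\<close> \<open>z \<noteq> u\<close> assms(1) by auto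
            then show ?thesis unfolding reached_from_def using \<open>z \<in> S\<close> induced_reach_refl by blast
          next
            case False
            then show ?thesis
              using y \<open>z \<in> S\<close> by (auto simp: reached_from_def intro: induced_reach_snoc)
          qed
        qed simp
      qed
    qed
    then show "y \<in> insert u (reached_from E S ?U')" using a by auto
  qed
next
  show "insert u (reached_from E S ?U') \<subseteq> ?L"
  proof
    fix y assume y: "y \<in> insert u (reached_from E S ?U')"
    show "y \<in> ?L"
    proof (cases "y = u")
      case True
      then show ?thesis unfolding reached_from_def using assms(3) induced_reach_refl by blast
    next
      case False
      then obtain b where b: "b \<in> ?U'" "induced_reach E S b y" "y \<in> S"
        using y unfolding reached_from_def by auto
      have "b \<in> S" using b induced_reach_outside by fastforce
      have "induced_reach E (insert u S) b y" using b induced_reach_mono by blast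
      then show ?thesis
        using b assms(3) \<open>b \<in> S\<close> by (auto simp: reached_from_def intro: induced_reach_cons)
    qed
  qed
qed

section \<open>Bernoulli sampling\<close>

definition bernoulli_weight :: "real \<Rightarrow> 'a set \<Rightarrow> 'a set \<Rightarrow> real" where
  "bernoulli_weight p W S = p ^ card S * (1 - p) ^ (card W - card S)"

definition bernoulli_prob :: "real \<Rightarrow> 'a set \<Rightarrow> ('a set \<Rightarrow> bool) \<Rightarrow> real" where
  "bernoulli_prob p W Q = (\<Sum>S | S \<subseteq> W \<and> Q S. bernoulli_weight p W S)"

lemma bernoulli_weight_nonneg: "0 \<le> p \<Longrightarrow> p \<le> 1 \<Longrightarrow> 0 \<le> bernoulli_weight p W S"
  unfolding bernoulli_weight_def by simp

lemma sum_Pow_insert_bernoulli_weight: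
  assumes "finite W" "u \<notin> W"
  shows "(\<Sum>S\<in>Pow (insert u W). bernoulli_weight p (insert u W) S * h S)
       = (1 - p) * (\<Sum>S\<in>Pow W. bernoulli_weight p W S * h S)
         + p * (\<Sum>S\<in>Pow W. bernoulli_weight p W S * h (insert u S))"
proof -
  have disjoint: "Pow W \<inter> insert u ` Pow W = {}" using assms by auto
  have inj: "inj_on (insert u) (Pow W)"
    using assms unfolding inj_on_def by (metis Pow_iff insert_absorb insert_ident subsetD)
  have weight_out: "bernoulli_weight p (insert u W) S = (1 - p) * bernoulli_weight p W S"
    if "S \<subseteq> W" for S
  proof -
    have "card S \<le> card W" using that assms card_mono by blast
    then show ?thesis using assms by (simp add: bernoulli_weight_def Suc_diff_le)
  qed
  have weight_in: "bernoulli_weight p (insert u W) (insert u S) = p * bernoulli_weight p W S"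
    if "S \<subseteq> W" for S
  proof -
    have "finite S" "u \<notin> S" using that assms finite_subset by auto
    then show ?thesis using assms by (simp add: bernoulli_weight_def)
  qed
  have "(\<Sum>S\<in>Pow (insert u W). bernoulli_weight p (insert u W) S * h S)
      = (\<Sum>S\<in>Pow W. bernoulli_weight p (insert u W) S * h S)
        + (\<Sum>S\<in>insert u ` Pow W. bernoulli_weight p (insert u W) S * h S)"
    unfolding Pow_insert by (rule sum.union_disjoint) (use assms disjoint in auto)
  also have "(\<Sum>S\<in>insert u ` Pow W. bernoulli_weight p (insert u W) S * h S)
      = (\<Sum>S\<in>Pow W. bernoulli_weight p (insert u W) (insert u S) * h (insert u S))"
    by (rule sum.reindex[OF inj, unfolded comp_def])
  finally show ?thesis
    by (simp add: sum_distrib_left weight_in weight_out mult.assoc)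
qed

lemma sum_bernoulli_weight: "finite W \<Longrightarrow> (\<Sum>S\<in>Pow W. bernoulli_weight p W S) = 1"
proof (induction rule: finite_induct)
  case empty
  then show ?case by (simp add: bernoulli_weight_def)
next
  case (insert u W)
  then show ?case
    using sum_Pow_insert_bernoulli_weight[OF insert(1,2), of p "\<lambda>_. 1"] by simp
qed

lemma bernoulli_prob_eq_sum_Pow:
  assumes "finite W"
  shows "bernoulli_prob p W Q = (\<Sum>S\<in>Pow W. if Q S then bernoulli_weight p W S else 0)"
proof -
  have "{S. S \<subseteq> W \<and> Q S} = {S \<in> Pow W. Q S}" by auto
  then show ?thesis
    unfolding bernoulli_prob_def using sum.inter_filter[of "Pow W" "bernoulli_weight p W" Q] assms
    by simp
qed

lemma bernoulli_prob_union_bound: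
  assumes "finite W" "finite I" "0 \<le> p" "p \<le> 1"
    and "\<And>S. S \<subseteq> W \<Longrightarrow> Q S \<Longrightarrow> \<exists>i\<in>I. R i S"
  shows "bernoulli_prob p W Q \<le> (\<Sum>i\<in>I. bernoulli_prob p W (R i))"
proof -
  have "bernoulli_prob p W Q
      \<le> (\<Sum>S | S \<subseteq> W \<and> Q S. \<Sum>i\<in>I. if R i S then bernoulli_weight p W S else 0)"
    unfolding bernoulli_prob_def
  proof (rule sum_mono)
    fix S assume "S \<in> {S. S \<subseteq> W \<and> Q S}"
    then obtain i where "i \<in> I" "R i S" using assms(5) by blast
    then have "(if R i S then bernoulli_weight p W S else 0)
        \<le> (\<Sum>i\<in>I. if R i S then bernoulli_weight p W S else 0)"
      using assms bernoulli_weight_nonneg by (intro member_le_sum) auto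
    then show "bernoulli_weight p W S \<le> (\<Sum>i\<in>I. if R i S then bernoulli_weight p W S else 0)"
      using \<open>R i S\<close> by simp
  qed
  also have "\<dots> \<le> (\<Sum>S | S \<subseteq> W. \<Sum>i\<in>I. if R i S then bernoulli_weight p W S else 0)"
    using assms
    by (intro sum_mono2) (auto intro!: sum_nonneg simp: bernoulli_weight_nonneg)
  also have "\<dots> = (\<Sum>i\<in>I. bernoulli_prob p W (R i))"
    unfolding bernoulli_prob_def
    by (subst sum.swap) (use assms(1) in \<open>simp add: sum.inter_filter[symmetric] Collect_conj_eq\<close>)
  finally show ?thesis .
qed

section \<open>Exploring a component of a Bernoulli sample\<close>

definition reach_mgf :: "(nat \<Rightarrow> nat \<Rightarrow> bool) \<Rightarrow> real \<Rightarrow> real \<Rightarrow> nat set \<Rightarrow> nat set \<Rightarrow> real" where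
  "reach_mgf E p x W U = (\<Sum>S\<in>Pow W. bernoulli_weight p W S * x ^ card (reached_from E S U))"

lemma reach_mgf_empty: "finite W \<Longrightarrow> reach_mgf E p x W {} = 1"
  unfolding reach_mgf_def reached_from_def using sum_bernoulli_weight by simp

text \<open>Exploring a start vertex u: it is either not sampled, or sampled and counted,
  in which case its unexplored neighbours become start vertices.\<close>
lemma reach_mgf_explore:
  assumes "finite W" "u \<in> U" "u \<in> W"
  shows "reach_mgf E p x W U = (1 - p) * reach_mgf E p x (W - {u}) (U - {u})
     + p * x * reach_mgf E p x (W - {u}) (U - {u} \<union> {z \<in> W - {u}. E u z})"
proof -
  let ?W = "W - {u}"
  let ?U = "U - {u} \<union> {z \<in> W - {u}. E u z}"
  have W: "W = insert u ?W" using assms by auto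
  have unsampled: "x ^ card (reached_from E S U) = x ^ card (reached_from E S (U - {u}))"
    if "S \<in> Pow ?W" for S
  proof -
    have "u \<notin> S" using that by auto
    from reached_from_Diff_outside[OF this, of E U] show ?thesis by simp
  qed
  have sampled: "x ^ card (reached_from E (insert u S) U) = x * x ^ card (reached_from E S ?U)"
    if "S \<in> Pow ?W" for S
  proof -
    have S: "S \<subseteq> ?W" "finite S" using that assms(1) finite_subset by auto
    then have "finite (reached_from E S ?U)" "u \<notin> reached_from E S ?U"
      using reached_from_subset[of E S ?U] by (auto intro: finite_subset)
    moreover have "reached_from E (insert u S) U = insert u (reached_from E S ?U)"
      by (rule reached_from_insert) (use that assms in auto)
    ultimately show ?thesis by simp
  qed
  have "reach_mgf E p x W U
      = (\<Sum>S\<in>Pow (insert u ?W). bernoulli_weight p (insert u ?W) S * x ^ card (reached_from E S U))"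
    unfolding reach_mgf_def by (simp only: W[symmetric])
  also have "\<dots> = (1 - p) * (\<Sum>S\<in>Pow ?W. bernoulli_weight p ?W S * x ^ card (reached_from E S U))
      + p * (\<Sum>S\<in>Pow ?W. bernoulli_weight p ?W S * x ^ card (reached_from E (insert u S) U))"
    by (rule sum_Pow_insert_bernoulli_weight) (use assms in auto)
  also have "(\<Sum>S\<in>Pow ?W. bernoulli_weight p ?W S * x ^ card (reached_from E S U))
      = reach_mgf E p x ?W (U - {u})"
    unfolding reach_mgf_def by (rule sum.cong) (simp_all add: unsampled)
  also have "(\<Sum>S\<in>Pow ?W. bernoulli_weight p ?W S * x ^ card (reached_from E (insert u S) U))
      = x * reach_mgf E p x ?W ?U"
    unfolding reach_mgf_def sum_distrib_left by (rule sum.cong) (simp_all add: sampled)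
  finally show ?thesis by (simp only: mult.assoc)
qed

lemma card_neighbours_Diff_less:
  assumes "finite W" "u \<in> W" "E z u"
  shows "card {y \<in> W - {u}. E z y} < card {y \<in> W. E z y}"
  by (rule psubset_card_mono) (use assms in auto)

lemma card_neighbours_le_max_degree:
  assumes "is_graph V E"
  shows "card {z \<in> V. E y z} \<le> max_degree V E"
proof (cases "y \<in> V")
  case True
  then show ?thesis using assms unfolding max_degree_def is_graph_def by (intro Max_ge) auto
next
  case False
  then have "{z \<in> V. E y z} = {}" using assms unfolding is_graph_def by blast
  then show ?thesis by (metis card.empty zero_le)
qed

text \<open>The exploration is dominated by a branching process with at most D - 1 children per
  vertex: if every start vertex has fewer than D unexplored neighbours, then each one
  contributes a factor g, where g is a supersolution of the branching process equation.\<close>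
lemma reach_mgf_le_power:
  assumes V: "finite V" and deg: "\<And>y. card {z \<in> V. E y z} \<le> D"
    and sym: "\<And>a b. E a b \<Longrightarrow> E b a"
    and p: "0 \<le> p" "p \<le> 1" and x: "0 \<le> x" and g: "1 \<le> g"
    and supersolution: "(1 - p) + p * x * g ^ (D - 1) \<le> g"
  shows "W \<subseteq> V \<Longrightarrow> U \<subseteq> W \<Longrightarrow> \<forall>u\<in>U. card {z \<in> W. E u z} < D \<Longrightarrow>
    reach_mgf E p x W U \<le> g ^ card U"
proof (induction "card W" arbitrary: W U rule: less_induct)
  case less
  have fW: "finite W" using less.prems(1) V by (rule finite_subset)
  show ?case
  proof (cases "U = {}")
    case True
    then show ?thesis using reach_mgf_empty[OF fW] by simp
  next
    case False
    then obtain u where u: "u \<in> U" by auto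
    have uW: "u \<in> W" using u less.prems by auto
    have fU: "finite U" using less.prems(2) fW by (rule finite_subset)
    let ?W = "W - {u}"
    let ?N = "{z \<in> ?W. E u z}"
    let ?U = "U - {u} \<union> ?N"
    have smaller: "card ?W < card W" using fW uW by (meson card_Diff1_less)
    have "?W \<subseteq> V" using less.prems by auto
    note IH = less.hyps[OF smaller this]
    have deg_W: "card {z \<in> ?W. E y z} \<le> card {z \<in> W. E y z}" for y
      by (rule card_mono) (use fW in auto)
    have deg_N: "card {y \<in> ?W. E z y} < D" if "z \<in> ?N" for z
    proof -
      have "card {y \<in> ?W. E z y} < card {y \<in> W. E z y}"
        using that sym by (intro card_neighbours_Diff_less[OF fW uW]) auto
      also have "\<dots> \<le> card {y \<in> V. E z y}" by (rule card_mono) (use V less.prems in auto)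
      finally show ?thesis using deg[of z] by linarith
    qed
    have "reach_mgf E p x ?W (U - {u}) \<le> g ^ card (U - {u})"
      using IH less.prems deg_W by (meson Diff_mono Diff_subset le_less_trans order_refl subset_iff)
    then have unsampled: "reach_mgf E p x ?W (U - {u}) \<le> g ^ (card U - 1)"
      using fU u by simp
    have "reach_mgf E p x ?W ?U \<le> g ^ card ?U"
    proof (rule IH)
      show "?U \<subseteq> ?W" using less.prems by auto
      show "\<forall>z\<in>?U. card {y \<in> ?W. E z y} < D"
        using less.prems(3) deg_N deg_W by (meson DiffD1 UnE le_less_trans)
    qed
    also have "card ?U \<le> (card U - 1) + (D - 1)"
    proof -
      have "card ?N \<le> card {z \<in> W. E u z}" by (rule card_mono) (use fW in auto)
      then have "card ?N \<le> D - 1" using less.prems(3) u by fastforce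
      then show ?thesis using card_Un_le[of "U - {u}" ?N] fU u by simp
    qed
    then have "g ^ card ?U \<le> g ^ (card U - 1) * g ^ (D - 1)"
      using g by (simp flip: power_add add: power_increasing)
    finally have sampled: "reach_mgf E p x ?W ?U \<le> g ^ (card U - 1) * g ^ (D - 1)" .
    have "reach_mgf E p x W U = (1 - p) * reach_mgf E p x ?W (U - {u}) + p * x * reach_mgf E p x ?W ?U"
      by (rule reach_mgf_explore[OF fW u uW])
    also have "\<dots> \<le> (1 - p) * g ^ (card U - 1) + p * x * (g ^ (card U - 1) * g ^ (D - 1))"
      using unsampled sampled p x by (intro add_mono mult_left_mono) simp_all
    also have "\<dots> = g ^ (card U - 1) * ((1 - p) + p * x * g ^ (D - 1))"
      by (simp add: algebra_simps)
    also have "\<dots> \<le> g ^ (card U - 1) * g" using supersolution g by (intro mult_left_mono) simp_all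
    also have "\<dots> = g ^ card U"
    proof -
      have "card U > 0" using fU u card_gt_0_iff by blast
      then have "card U = Suc (card U - 1)" by simp
      then show ?thesis by (metis power_Suc2)
    qed
    finally show ?thesis .
  qed
qed

lemma reach_mgf_singleton_le:
  assumes V: "finite V" and deg: "\<And>y. card {z \<in> V. E y z} \<le> D"
    and sym: "\<And>a b. E a b \<Longrightarrow> E b a"
    and p: "0 \<le> p" "p \<le> 1" and x: "0 \<le> x" and g: "1 \<le> g"
    and supersolution: "(1 - p) + p * x * g ^ (D - 1) \<le> g" and v: "v \<in> V"
  shows "reach_mgf E p x V {v} \<le> (1 - p) + p * x * g ^ D"
proof -
  let ?W = "V - {v}"
  let ?N = "{z \<in> ?W. E v z}"
  have "reach_mgf E p x V {v} = (1 - p) + p * x * reach_mgf E p x ?W ?N"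
    using reach_mgf_explore[OF V _ v, of "{v}" E p x] reach_mgf_empty[of ?W E p x] V by simp
  also have "reach_mgf E p x ?W ?N \<le> g ^ card ?N"
  proof (rule reach_mgf_le_power[OF V deg sym p x g supersolution])
    show "\<forall>u\<in>?N. card {z \<in> ?W. E u z} < D"
    proof
      fix z assume "z \<in> ?N"
      then have "card {y \<in> ?W. E z y} < card {y \<in> V. E z y}"
        using sym by (intro card_neighbours_Diff_less[OF V v]) auto
      then show "card {y \<in> ?W. E z y} < D" using deg[of z] by linarith
    qed
  qed auto
  also have "g ^ card ?N \<le> g ^ D"
  proof (rule power_increasing[OF _ g])
    have "card ?N \<le> card {z \<in> V. E v z}" by (rule card_mono) (use V in auto)
    then show "card ?N \<le> D" using deg[of v] by linarith
  qed
  finally show ?thesis using p x by (simp add: mult_left_mono)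
qed

lemma bernoulli_prob_reached_gt_le:
  assumes "finite V" "1 < x" "0 \<le> p" "p \<le> 1"
  shows "bernoulli_prob p V (\<lambda>S. K < real (card (reached_from E S {v})))
    \<le> reach_mgf E p x V {v} / x powr K"
proof -
  have indicator_le: "(if K < real (card (reached_from E S {v})) then w else 0)
      \<le> w * (x ^ card (reached_from E S {v}) / x powr K)" if "0 \<le> w" for w S
    using assms(2) that by (auto simp: powr_realpow[symmetric] divide_simps intro!: mult_left_mono powr_mono)
  have "bernoulli_prob p V (\<lambda>S. K < real (card (reached_from E S {v})))
      = (\<Sum>S\<in>Pow V. if K < real (card (reached_from E S {v})) then bernoulli_weight p V S else 0)"
    by (rule bernoulli_prob_eq_sum_Pow[OF assms(1)])
  also have "\<dots> \<le> (\<Sum>S\<in>Pow V. bernoulli_weight p V S * (x ^ card (reached_from E S {v}) / x powr K))"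
    using indicator_le assms(3,4) bernoulli_weight_nonneg by (intro sum_mono) blast
  also have "\<dots> = reach_mgf E p x V {v} / x powr K"
    unfolding reach_mgf_def sum_divide_distrib by (simp add: mult.assoc)
  finally show ?thesis .
qed

lemma largest_component_size_gt_witness:
  assumes "finite S" "0 \<le> K" "K < real (largest_component_size E S)"
  shows "\<exists>v\<in>S. K < real (card (reached_from E S {v}))"
proof -
  let ?A = "insert 0 ((\<lambda>v. card (induced_component E S v)) ` S)"
  have "Max ?A \<in> ?A" using assms(1) by (intro Max_in) auto
  moreover have "Max ?A \<noteq> 0" using assms(2,3) unfolding largest_component_size_def by auto
  ultimately obtain v where "v \<in> S" "Max ?A = card (induced_component E S v)" by auto
  then show ?thesis
    using assms(3) unfolding largest_component_size_def induced_component_eq_reached_from by auto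
qed

lemma ln_one_plus_div8_ge:
  fixes t :: real
  assumes t: "0 \<le> t" "t \<le> 1"
  shows "t / 16 \<le> ln (1 + t / 8)"
proof -
  have "t * t \<le> t" using t by (simp add: mult_left_le)
  then have "t / 16 \<le> t / 8 - (t / 8)^2" using t by (simp add: power2_eq_square)
  also have "\<dots> \<le> ln (1 + t / 8)" using t by (intro ln_one_plus_pos_lower_bound) simp_all
  finally show ?thesis .
qed

lemma power_one_plus_div_le: "0 \<le> e \<Longrightarrow> e \<le> 1 \<Longrightarrow> (1 + e / (2 * real D)) ^ D \<le> 1 + e/2 + e^2/4"
proof -
  assume e: "0 \<le> e" "e \<le> 1"
  have "(1 + e / (2 * real D)) ^ D \<le> exp (e / (2 * real D)) ^ D"
    using e by (intro power_mono) (simp_all add: exp_ge_add_one_self)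
  also have "\<dots> \<le> exp (e / 2)"
    using e by (cases "D = 0") (simp_all add: exp_of_nat_mult[symmetric])
  also have "\<dots> \<le> 1 + e/2 + (e/2)^2" using e by (intro exp_bound) simp_all
  finally show ?thesis by (simp add: power2_eq_square)
qed

text \<open>With sampling rate p = (1 - e)/D the offspring mean is below 1 - e; the small tilt
  x = 1 + e^2/8 still leaves g = 1 + e/(2D) a supersolution.\<close>
lemma exploration_supersolution:
  fixes e :: real and D :: nat
  assumes e: "0 < e" "e < 1" and D: "1 \<le> D"
  defines "p \<equiv> (1 - e) / D" and "g \<equiv> 1 + e / (2 * D)" and "x \<equiv> 1 + e^2 / 8"
  shows "(1 - p) + p * x * g ^ D \<le> g"
proof -
  have p: "0 \<le> p" using e unfolding p_def by simp
  have "(1 - e) * (x * (1 + e/2 + e^2/4) - 1) = e/2 - e^2/8 - 5*e^3/16 - e^4/32 - e^5/32"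
    unfolding x_def by (simp add: algebra_simps power2_eq_square power3_eq_cube power4_eq_xxxx)
      (simp add: field_simps power_def numeral_eq_Suc)
  also have "\<dots> \<le> e/2"
  proof -
    have "0 \<le> e^2/8 + 5*e^3/16 + e^4/32 + e^5/32" using e by simp
    then show ?thesis by linarith
  qed
  finally have "(1 - e) * (x * (1 + e/2 + e^2/4) - 1) / D \<le> (e/2) / D"
    using D by (intro divide_right_mono) simp_all
  then have "p * (x * (1 + e/2 + e^2/4) - 1) \<le> e / (2 * D)" unfolding p_def by simp
  moreover have "p * x * g ^ D \<le> p * x * (1 + e/2 + e^2/4)"
    unfolding g_def using power_one_plus_div_le[of e D] e p by (intro mult_left_mono) (simp_all add: x_def)
  ultimately show ?thesis unfolding g_def by (simp add: algebra_simps)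
qed

lemma bernoulli_prob_large_component_le:
  assumes G: "is_graph V E" and D: "1 \<le> max_degree V E"
    and e: "0 < e" "e < 1" and K: "0 \<le> K"
  shows "bernoulli_prob ((1 - e) / max_degree V E) V (\<lambda>S. K < real (largest_component_size E S))
    \<le> 2 * card V / exp (K * e^2 / 16)"
proof -
  define D where "D = max_degree V E"
  define p where "p = (1 - e) / D"
  define g where "g = 1 + e / (2 * D)"
  define x where "x = 1 + e^2 / 8"
  have V: "finite V" and sym: "\<And>a b. E a b \<Longrightarrow> E b a" using G unfolding is_graph_def by auto
  have deg: "card {z \<in> V. E y z} \<le> D" for y
    unfolding D_def using card_neighbours_le_max_degree[OF G] .
  have p: "0 \<le> p" "p \<le> 1" using e D unfolding p_def D_def by (simp_all add: divide_le_eq)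
  have g: "1 \<le> g" "g \<le> 2" using e D unfolding g_def D_def by (simp_all add: divide_le_eq)
  have x: "1 < x" using e unfolding x_def by simp
  have supersolution: "(1 - p) + p * x * g ^ D \<le> g"
    unfolding p_def g_def x_def using exploration_supersolution[OF e] D D_def by simp
  have "p * x * g ^ (D - 1) \<le> p * x * g ^ D"
    using p x g by (intro mult_left_mono power_increasing) simp_all
  then have supersolution': "(1 - p) + p * x * g ^ (D - 1) \<le> g" using supersolution by linarith
  have "exp (K * e^2 / 16) \<le> exp (K * ln x)"
    using mult_left_mono[OF ln_one_plus_div8_ge[of "e^2"] K] e unfolding x_def
    by (simp add: power_le_one)
  also have "\<dots> = x powr K" using x by (simp add: powr_def)
  finally have tail: "exp (K * e^2 / 16) \<le> x powr K" .
  have per_vertex: "bernoulli_prob p V (\<lambda>S. K < real (card (reached_from E S {v})))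
      \<le> 2 / exp (K * e^2 / 16)" if "v \<in> V" for v
  proof -
    have mgf: "reach_mgf E p x V {v} \<le> 2"
      using reach_mgf_singleton_le[where E = E, OF V deg sym p _ g(1) supersolution' that]
        supersolution g x
      by simp
    have "bernoulli_prob p V (\<lambda>S. K < real (card (reached_from E S {v})))
        \<le> reach_mgf E p x V {v} / x powr K"
      by (rule bernoulli_prob_reached_gt_le[OF V x p])
    also have "\<dots> \<le> 2 / x powr K" using mgf by (simp add: divide_right_mono)
    also have "\<dots> \<le> 2 / exp (K * e^2 / 16)" using tail by (simp add: frac_le)
    finally show ?thesis .
  qed
  have "bernoulli_prob p V (\<lambda>S. K < real (largest_component_size E S))
      \<le> (\<Sum>v\<in>V. bernoulli_prob p V (\<lambda>S. K < real (card (reached_from E S {v}))))"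
  proof (rule bernoulli_prob_union_bound[OF V V p])
    fix S assume "S \<subseteq> V" "K < real (largest_component_size E S)"
    then show "\<exists>v\<in>V. K < real (card (reached_from E S {v}))"
      using largest_component_size_gt_witness[OF finite_subset[OF _ V] K] by blast
  qed
  also have "\<dots> \<le> (\<Sum>v\<in>V. 2 / exp (K * e^2 / 16))" by (rule sum_mono) (rule per_vertex)
  finally show ?thesis unfolding p_def D_def by (simp add: mult.commute)
qed

section \<open>Upward-closed properties of uniformly random subsets\<close>

definition sat_subsets :: "('a set \<Rightarrow> bool) \<Rightarrow> 'a set \<Rightarrow> nat \<Rightarrow> 'a set set" where
  "sat_subsets Q V j = {S. S \<subseteq> V \<and> card S = j \<and> Q S}"

definition upward_closed_on :: "'a set \<Rightarrow> ('a set \<Rightarrow> bool) \<Rightarrow> bool" where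
  "upward_closed_on V Q \<longleftrightarrow> (\<forall>S T. Q S \<longrightarrow> S \<subseteq> T \<longrightarrow> T \<subseteq> V \<longrightarrow> Q T)"

definition level_density :: "('a set \<Rightarrow> bool) \<Rightarrow> 'a set \<Rightarrow> nat \<Rightarrow> real" where
  "level_density Q V j = card (sat_subsets Q V j) / (card V choose j)"

lemma finite_sat_subsets: "finite V \<Longrightarrow> finite (sat_subsets Q V j)"
  unfolding sat_subsets_def by (rule finite_subset[of _ "Pow V"]) auto

lemma card_sat_subsets_True: "finite V \<Longrightarrow> card (sat_subsets (\<lambda>_. True) V j) = card V choose j"
  unfolding sat_subsets_def by (simp add: n_subsets)

lemma level_density_nonneg: "0 \<le> level_density Q V j"
  unfolding level_density_def by simp

text \<open>Double counting of the pairs (S, y) with S a j-set satisfying Q and y \<notin> S: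
  each S \<union> {y} is a (j+1)-set satisfying Q, and arises from at most j + 1 such pairs.\<close>
lemma card_sat_subsets_Suc_ge:
  assumes V: "finite V" and up: "upward_closed_on V Q" and j: "j < card V"
  shows "card (sat_subsets Q V j) * (card V - j) \<le> card (sat_subsets Q V (Suc j)) * Suc j"
proof -
  let ?A = "Sigma (sat_subsets Q V j) (\<lambda>S. V - S)"
  let ?B = "Sigma (sat_subsets Q V (Suc j)) (\<lambda>T. T)"
  have fin: "finite S" if "S \<in> sat_subsets Q V i" for S i
    using that V finite_subset unfolding sat_subsets_def by auto
  have "card ?A = (\<Sum>S\<in>sat_subsets Q V j. card (V - S))"
    using finite_sat_subsets[OF V] V by (intro card_SigmaI) auto
  also have "\<dots> = (\<Sum>S\<in>sat_subsets Q V j. card V - j)"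
  proof (rule sum.cong[OF refl])
    fix S assume S: "S \<in> sat_subsets Q V j"
    then show "card (V - S) = card V - j"
      using fin[OF S] unfolding sat_subsets_def by (simp add: card_Diff_subset)
  qed
  finally have card_A: "card ?A = card (sat_subsets Q V j) * (card V - j)" by simp
  have "card ?B = (\<Sum>T\<in>sat_subsets Q V (Suc j). card T)"
    using finite_sat_subsets[OF V] fin by (intro card_SigmaI) auto
  also have "\<dots> = card (sat_subsets Q V (Suc j)) * Suc j"
    by (simp add: sat_subsets_def)
  finally have card_B: "card ?B = card (sat_subsets Q V (Suc j)) * Suc j" .
  have "card ?A \<le> card ?B"
  proof (rule card_inj_on_le[where f = "\<lambda>(S, y). (insert y S, y)"])
    show "inj_on (\<lambda>(S, y). (insert y S, y)) ?A"
      by (auto simp: inj_on_def) (metis Diff_insert_absorb)+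
    show "(\<lambda>(S, y). (insert y S, y)) ` ?A \<subseteq> ?B"
    proof
      fix z assume "z \<in> (\<lambda>(S, y). (insert y S, y)) ` ?A"
      then obtain S y where S: "S \<in> sat_subsets Q V j" and y: "y \<in> V" "y \<notin> S"
        and z: "z = (insert y S, y)" by auto
      have "S \<subseteq> V" "card S = j" "Q S" using S unfolding sat_subsets_def by auto
      moreover have "Q (insert y S)" using up \<open>Q S\<close> \<open>S \<subseteq> V\<close> y unfolding upward_closed_on_def by blast
      ultimately have "insert y S \<in> sat_subsets Q V (Suc j)"
        using fin[OF S] y unfolding sat_subsets_def by simp
      then show "z \<in> ?B" using z by simp
    qed
    show "finite ?B" using finite_sat_subsets[OF V] fin by (intro finite_SigmaI)
  qed
  then show ?thesis using card_A card_B by simp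
qed

lemma choose_Suc_mult: "j < n \<Longrightarrow> (n choose Suc j) * Suc j = (n choose j) * (n - j)"
  using Suc_times_binomial[of j "n - 1"] binomial_absorb_comp[of n j] by (simp add: mult.commute)

lemma level_density_le_Suc:
  assumes V: "finite V" and up: "upward_closed_on V Q" and j: "j < card V"
  shows "level_density Q V j \<le> level_density Q V (Suc j)"
proof -
  let ?n = "card V" and ?a = "card (sat_subsets Q V j)" and ?b = "card (sat_subsets Q V (Suc j))"
  have "?a * (?n choose Suc j) * Suc j = ?a * ((?n choose Suc j) * Suc j)"
    by (simp only: mult.assoc)
  also have "\<dots> = ?a * (?n - j) * (?n choose j)"
    unfolding choose_Suc_mult[OF j] by (simp only: ac_simps)
  also have "\<dots> \<le> ?b * Suc j * (?n choose j)"
    using card_sat_subsets_Suc_ge[OF V up j] by (rule mult_right_mono) simp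
  also have "\<dots> = ?b * (?n choose j) * Suc j" by (simp only: ac_simps)
  finally have "?a * (?n choose Suc j) \<le> ?b * (?n choose j)"
    by (metis mult_le_cancel2 zero_less_Suc)
  then have "real ?a * real (?n choose Suc j) \<le> real ?b * real (?n choose j)"
    by (metis of_nat_le_iff of_nat_mult)
  moreover have "0 < real (?n choose j)" "0 < real (?n choose Suc j)" using j by simp_all
  ultimately show ?thesis unfolding level_density_def by (simp add: divide_simps mult.commute)
qed

lemma level_density_mono:
  assumes "finite V" "upward_closed_on V Q" "i \<le> j" "j \<le> card V"
  shows "level_density Q V i \<le> level_density Q V j"
  using assms(3,4)
proof (induction j rule: dec_induct)
  case (step k)
  then show ?case using level_density_le_Suc[OF assms(1,2), of k] by simp
qed simp

lemma bernoulli_prob_by_level: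
  assumes "finite V"
  shows "bernoulli_prob p V Q
    = (\<Sum>j\<le>card V. real (card (sat_subsets Q V j)) * (p ^ j * (1 - p) ^ (card V - j)))"
proof -
  have "bernoulli_prob p V Q
      = (\<Sum>j\<le>card V. \<Sum>S\<in>{S \<in> {S. S \<subseteq> V \<and> Q S}. card S = j}. bernoulli_weight p V S)"
    unfolding bernoulli_prob_def
    using assms by (intro sum.group[symmetric]) (auto intro: card_mono finite_subset[of _ "Pow V"])
  also have "\<dots> = (\<Sum>j\<le>card V. \<Sum>S\<in>sat_subsets Q V j. p ^ j * (1 - p) ^ (card V - j))"
    by (intro sum.cong) (auto simp: sat_subsets_def bernoulli_weight_def)
  finally show ?thesis by simp
qed

lemma binomial_term_le_Suc:
  fixes p :: real
  assumes p: "0 < p" "p < 1" and j: "Suc j \<le> B" "real B \<le> real n * p"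
  shows "(n choose j) * p ^ j * (1 - p) ^ (n - j)
    \<le> (n choose Suc j) * p ^ Suc j * (1 - p) ^ (n - Suc j)"
    (is "?t j \<le> ?t (Suc j)")
proof -
  have "n \<noteq> 0"
  proof
    assume "n = 0"
    then have "B = 0" using j(2) by simp
    then show False using j(1) by simp
  qed
  have "real j + 1 \<le> real n * p" using j by simp
  also have "\<dots> < real n" using p \<open>n \<noteq> 0\<close> by (simp add: mult_less_cancel_left2)
  finally have jn: "j < n" by simp
  have choose: "real (n choose Suc j) * real (Suc j) = real (n choose j) * real (n - j)"
    using choose_Suc_mult[OF jn] by (metis of_nat_mult)
  have nj: "n - j = Suc (n - Suc j)" using jn by simp
  have "?t (Suc j) * (real (Suc j) * (1 - p))
      = real (n choose Suc j) * real (Suc j) * p ^ Suc j * (1 - p) ^ Suc (n - Suc j)"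
    by (simp add: algebra_simps)
  also have "\<dots> = ?t j * (real (n - j) * p)"
    unfolding choose nj[symmetric] by (simp add: algebra_simps)
  finally have ratio: "?t (Suc j) * (real (Suc j) * (1 - p)) = ?t j * (real (n - j) * p)" .
  have "real (Suc j) * (1 - p) \<le> real (n - j) * p"
    using \<open>real j + 1 \<le> real n * p\<close> jn p by (simp add: of_nat_diff algebra_simps)
  then have "?t j * (real (Suc j) * (1 - p)) \<le> ?t (Suc j) * (real (Suc j) * (1 - p))"
    unfolding ratio using p by (intro mult_left_mono) simp_all
  moreover have "0 < real (Suc j) * (1 - p)" using p by simp
  ultimately show ?thesis by (rule mult_right_le_imp_le)
qed

text \<open>The binomial terms increase up to B \<le> np, and the n + 1 terms sum to 1.\<close>
lemma binomial_term_ge_inverse: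
  fixes p :: real
  assumes p: "0 < p" "p < 1" and B: "real B \<le> real n * p" "B \<le> n"
  shows "\<exists>m. B \<le> m \<and> m \<le> n \<and> 1 / (real n + 1) \<le> (n choose m) * p ^ m * (1 - p) ^ (n - m)"
proof -
  define t where "t j = (n choose j) * p ^ j * (1 - p) ^ (n - j)" for j
  have below_B: "t j \<le> t B" if "j \<le> B" for j
    using that
  proof (induction j rule: inc_induct)
    case (step k)
    then show ?case using binomial_term_le_Suc[OF p _ B(1), of k] unfolding t_def by simp
  qed simp
  have "Max (t ` {B..n}) \<in> t ` {B..n}" using B(2) by (intro Max_in) auto
  then obtain m where m: "m \<in> {B..n}" "t m = Max (t ` {B..n})" by auto
  have le_m: "t j \<le> t m" if "j \<le> n" for j
  proof (cases "j \<le> B")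
    case True
    have "t B \<le> t m" unfolding m(2) using B(2) by (intro Max_ge) auto
    then show ?thesis using below_B[OF True] by linarith
  next
    case False
    then show ?thesis using m that by simp
  qed
  have "1 = (\<Sum>j\<le>n. t j)" using binomial_ring[of p "1 - p" n] unfolding t_def by simp
  also have "\<dots> \<le> (\<Sum>j\<le>n. t m)" by (rule sum_mono) (use le_m in simp)
  finally have "1 / (real n + 1) \<le> t m" by (simp add: divide_le_eq algebra_simps)
  then show ?thesis using m unfolding t_def by auto
qed

lemma level_density_le_bernoulli_prob:
  assumes V: "finite V" and up: "upward_closed_on V Q" and p: "0 < p" "p < 1"
    and B: "real B \<le> real (card V) * p"
  shows "level_density Q V B \<le> (real (card V) + 1) * bernoulli_prob p V Q"
proof -
  let ?n = "card V"
  have "real ?n * p \<le> real ?n" using p by (simp add: mult_left_le)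
  then have "real B \<le> real ?n" using B by linarith
  then obtain m where m: "B \<le> m" "m \<le> ?n" "1 / (real ?n + 1) \<le> (?n choose m) * p ^ m * (1 - p) ^ (?n - m)"
    using binomial_term_ge_inverse[OF p B] by auto
  have "level_density Q V B * (1 / (real ?n + 1))
      \<le> level_density Q V m * ((?n choose m) * p ^ m * (1 - p) ^ (?n - m))"
    using level_density_mono[OF V up m(1,2)] m(3) p level_density_nonneg
    by (intro mult_mono) simp_all
  also have "\<dots> = real (card (sat_subsets Q V m)) * (p ^ m * (1 - p) ^ (?n - m))"
    unfolding level_density_def using m(2) by (simp add: field_simps)
  also have "\<dots> \<le> bernoulli_prob p V Q"
    unfolding bernoulli_prob_by_level[OF V] using m p
    by (intro member_le_sum[where f = "\<lambda>j. real (card (sat_subsets Q V j)) * (p ^ j * (1 - p) ^ (?n - j))"])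
      auto
  finally show ?thesis by (simp add: divide_le_eq mult.commute)
qed

section \<open>Sampling with replacement\<close>

definition surjections :: "'i set \<Rightarrow> 'a set \<Rightarrow> ('i \<Rightarrow> 'a) set" where
  "surjections I T = {f \<in> PiE I (\<lambda>_. T). f ` I = T}"

lemma card_surjections_le:
  assumes h: "bij_betw h T T'" and fin: "finite I" "finite T'"
  shows "card (surjections I T) \<le> card (surjections I T')"
proof (rule card_inj_on_le[where f = "\<lambda>f. restrict (h \<circ> f) I"])
  have inj: "inj_on h T" and im: "h ` T = T'" using h by (auto simp: bij_betw_def)
  show "inj_on (\<lambda>f. restrict (h \<circ> f) I) (surjections I T)"
  proof (rule inj_onI)
    fix f g assume f: "f \<in> surjections I T" and g: "g \<in> surjections I T"
      and eq: "restrict (h \<circ> f) I = restrict (h \<circ> g) I"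
    show "f = g"
    proof (rule PiE_ext)
      show "f \<in> PiE I (\<lambda>_. T)" "g \<in> PiE I (\<lambda>_. T)" using f g by (auto simp: surjections_def)
      fix i assume i: "i \<in> I"
      have "h (f i) = h (g i)" using fun_cong[OF eq, of i] i by simp
      moreover have "f i \<in> T" "g i \<in> T" using f g i by (auto simp: surjections_def)
      ultimately show "f i = g i" using inj by (meson inj_onD)
    qed
  qed
  show "(\<lambda>f. restrict (h \<circ> f) I) ` surjections I T \<subseteq> surjections I T'"
  proof clarify
    fix f assume "f \<in> surjections I T"
    then have "f \<in> PiE I (\<lambda>_. T)" "f ` I = T" by (auto simp: surjections_def)
    moreover have "restrict (h \<circ> f) I ` I = h ` (f ` I)" by auto
    ultimately show "restrict (h \<circ> f) I \<in> surjections I T'"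
      using im by (auto simp: surjections_def PiE_iff)
  qed
  show "finite (surjections I T')" using fin by (simp add: surjections_def finite_PiE)
qed

lemma card_surjections_eq:
  assumes "finite I" "finite T" "finite T'" "card T = card T'"
  shows "card (surjections I T) = card (surjections I T')"
proof -
  obtain h where h: "bij_betw h T T'" using bij_betw_iff_card assms(2-4) by blast
  show ?thesis
    using card_surjections_le[OF h assms(1,3)]
      card_surjections_le[OF bij_betw_inv_into[OF h] assms(1,2)] by simp
qed

lemma surjections_empty_if_card_gt:
  assumes "card I < card T" "finite I"
  shows "surjections I T = {}"
proof (rule ccontr)
  assume "surjections I T \<noteq> {}"
  then obtain f where "f ` I = T" unfolding surjections_def by auto
  then have "card T \<le> card I" using card_image_le[OF assms(2)] by blast
  then show False using assms(1) by simp
qed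

lemma card_PiE_image_sat:
  assumes V: "finite V" and I: "finite I"
  shows "card {f \<in> PiE I (\<lambda>_. V). Q (f ` I)}
    = (\<Sum>j\<le>card V. \<Sum>T\<in>sat_subsets Q V j. card (surjections I T))"
proof -
  let ?X = "{f \<in> PiE I (\<lambda>_. V). Q (f ` I)}"
  have "finite ?X" by (rule finite_subset[OF _ finite_PiE[OF I]]) (use V in auto)
  have "card ?X = (\<Sum>f\<in>?X. 1)" by simp
  also have "\<dots> = (\<Sum>T | T \<subseteq> V \<and> Q T. \<Sum>f\<in>{f \<in> ?X. f ` I = T}. 1)"
    by (rule sum.group[symmetric]) (use \<open>finite ?X\<close> V in \<open>auto simp: PiE_iff\<close>)
  also have "\<dots> = (\<Sum>T | T \<subseteq> V \<and> Q T. card (surjections I T))"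
    by (intro sum.cong) (auto simp: surjections_def PiE_iff intro!: arg_cong[where f = card])
  also have "\<dots> = (\<Sum>j\<le>card V. \<Sum>T\<in>{T \<in> {T. T \<subseteq> V \<and> Q T}. card T = j}. card (surjections I T))"
    using V by (intro sum.group[symmetric]) (auto intro: card_mono finite_subset[of _ "Pow V"])
  also have "\<dots> = (\<Sum>j\<le>card V. \<Sum>T\<in>sat_subsets Q V j. card (surjections I T))"
    unfolding sat_subsets_def by (intro sum.cong) auto
  finally show ?thesis .
qed

text \<open>The number of tuples hitting a given j-set exactly does not depend on the set, so
  conditioned on its image size a random tuple has a uniformly random image.\<close>
lemma sum_card_surjections_level:
  assumes V: "finite V" and I: "finite I" and j: "j \<le> card V"
  shows "real (\<Sum>T\<in>sat_subsets Q V j. card (surjections I T))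
    = level_density Q V j * real (\<Sum>T\<in>sat_subsets (\<lambda>_. True) V j. card (surjections I T))"
proof -
  obtain T0 where T0: "T0 \<subseteq> V" "card T0 = j"
    using j by (meson obtain_subset_with_card_n)
  have same: "card (surjections I T) = card (surjections I T0)" if "T \<in> sat_subsets R V j" for R T
    using that T0 V I finite_subset unfolding sat_subsets_def by (intro card_surjections_eq) auto
  have "real (\<Sum>T\<in>sat_subsets Q V j. card (surjections I T))
      = card (sat_subsets Q V j) * card (surjections I T0)"
    using same[of _ Q] by simp
  moreover have "real (\<Sum>T\<in>sat_subsets (\<lambda>_. True) V j. card (surjections I T))
      = (card V choose j) * card (surjections I T0)"
    using same[of _ "\<lambda>_. True"] card_sat_subsets_True[OF V] by simp
  moreover have "0 < card V choose j" using j by simp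
  ultimately show ?thesis unfolding level_density_def by simp
qed

lemma card_PiE_image_sat_le:
  assumes V: "finite V" and I: "finite I" and up: "upward_closed_on V Q" and "card I \<le> card V"
  shows "real (card {f \<in> PiE I (\<lambda>_. V). Q (f ` I)}) \<le> level_density Q V (card I) * card V ^ card I"
proof -
  let ?N = "\<lambda>j. real (\<Sum>T\<in>sat_subsets (\<lambda>_. True) V j. card (surjections I T))"
  have level_le: "level_density Q V j * ?N j \<le> level_density Q V (card I) * ?N j"
    if "j \<le> card V" for j
  proof (cases "j \<le> card I")
    case True
    show ?thesis
      using level_density_mono[OF V up True assms(4)] by (rule mult_right_mono[OF _ of_nat_0_le_iff])
  next
    case False
    then have "surjections I T = {}" if "T \<in> sat_subsets (\<lambda>_. True) V j" for T
      using that False by (intro surjections_empty_if_card_gt[OF _ I]) (simp add: sat_subsets_def)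
    then have "(\<Sum>T\<in>sat_subsets (\<lambda>_. True) V j. card (surjections I T)) = 0"
      by (intro sum.neutral) simp
    then show ?thesis by simp
  qed
  have "real (card {f \<in> PiE I (\<lambda>_. V). Q (f ` I)}) = (\<Sum>j\<le>card V. level_density Q V j * ?N j)"
    unfolding card_PiE_image_sat[OF V I]
    by (subst of_nat_sum) (rule sum.cong[OF refl], rule sum_card_surjections_level[OF V I], simp)
  also have "\<dots> \<le> (\<Sum>j\<le>card V. level_density Q V (card I) * ?N j)"
    using level_le by (intro sum_mono) simp
  also have "\<dots> = level_density Q V (card I) * card {f \<in> PiE I (\<lambda>_. V). True}"
    unfolding card_PiE_image_sat[OF V I, of "\<lambda>_. True"] by (simp only: sum_distrib_left of_nat_sum)
  also have "card {f \<in> PiE I (\<lambda>_. V). True} = card V ^ card I"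
    using I by (simp add: card_PiE)
  finally show ?thesis by simp
qed

section \<open>The largest component of a sample\<close>

lemma prob_uniform_subset_sat:
  assumes "finite V" "B \<le> card V"
  shows "measure_pmf.prob (pmf_of_set {S. S \<subseteq> V \<and> card S = B}) {S. Q S} = level_density Q V B"
proof -
  let ?A = "{S. S \<subseteq> V \<and> card S = B}"
  have card_A: "card ?A = card V choose B"
    using card_sat_subsets_True[OF assms(1)] by (simp add: sat_subsets_def)
  then have "?A \<noteq> {}" using assms(2) by (metis card.empty zero_less_binomial_iff less_irrefl)
  moreover have "finite ?A" by (rule finite_subset[of _ "Pow V"]) (use assms(1) in auto)
  moreover have "?A \<inter> {S. Q S} = sat_subsets Q V B" by (auto simp: sat_subsets_def)
  ultimately show ?thesis by (simp add: measure_pmf_of_set card_A level_density_def)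
qed

lemma prob_uniform_tuple_sat_le:
  assumes "finite V" "V \<noteq> {}" "finite I" "upward_closed_on V Q" "card I \<le> card V"
  shows "measure_pmf.prob (pmf_of_set (PiE I (\<lambda>_. V))) {f. Q (f ` I)} \<le> level_density Q V (card I)"
proof -
  let ?P = "PiE I (\<lambda>_. V)"
  have "?P \<noteq> {}" "finite ?P" using assms(1-3) by (simp_all add: PiE_eq_empty_iff finite_PiE)
  moreover have "?P \<inter> {f. Q (f ` I)} = {f \<in> ?P. Q (f ` I)}" by auto
  moreover have "real (card V) ^ card I > 0" using assms(1,2) by (simp add: card_gt_0_iff)
  ultimately show ?thesis
    using card_PiE_image_sat_le[OF assms(1,3,4,5)] assms(3)
    by (simp add: measure_pmf_of_set card_PiE divide_le_eq)
qed

lemma largest_component_size_mono: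
  assumes "S \<subseteq> T" "finite T"
  shows "largest_component_size E S \<le> largest_component_size E T"
  unfolding largest_component_size_def
proof (rule Max.boundedI)
  show "finite (insert 0 ((\<lambda>v. card (induced_component E S v)) ` S))"
    using assms finite_subset by auto
  fix a assume "a \<in> insert 0 ((\<lambda>v. card (induced_component E S v)) ` S)"
  then consider "a = 0" | v where "v \<in> S" "a = card (induced_component E S v)" by auto
  then show "a \<le> Max (insert 0 ((\<lambda>v. card (induced_component E T v)) ` T))"
  proof cases
    case 2
    have "induced_component E S v \<subseteq> induced_component E T v"
      unfolding induced_component_def using assms(1) induced_reach_mono by blast
    moreover have "finite (induced_component E T v)"
      using assms(2) unfolding induced_component_def by simp
    ultimately have "a \<le> card (induced_component E T v)" using 2 card_mono by metis
    also have "\<dots> \<le> Max (insert 0 ((\<lambda>v. card (induced_component E T v)) ` T))"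
      using 2 assms by (intro Max_ge) auto
    finally show ?thesis .
  qed simp
qed simp

lemma upward_closed_large_component:
  "finite V \<Longrightarrow> upward_closed_on V (\<lambda>S. K < real (largest_component_size E S))"
  unfolding upward_closed_on_def
  by (meson finite_subset largest_component_size_mono of_nat_le_iff order_less_le_trans)

lemma sample_size_le:
  assumes "0 < e" "e < 1"
  shows "real (sample_size n D e) \<le> (1 - e) * real n / real D"
  unfolding sample_size_def using assms by (simp add: of_nat_nat)

lemma sample_size_le_card:
  assumes "0 < e" "e < 1"
  shows "sample_size n D e \<le> n"
proof (cases "D = 0")
  case False
  have "(1 - e) * real n \<le> real D * real n"
    using assms False by (intro mult_right_mono) simp_all
  then have "(1 - e) * real n / real D \<le> real n" using False by (simp add: divide_le_eq mult.commute)
  then have "real (sample_size n D e) \<le> real n" using sample_size_le[OF assms, of n D] by linarith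
  then show ?thesis by simp
qed (simp add: sample_size_def)

text \<open>With K = 96 ln n / e^2 the Bernoulli bound 2n / exp (K e^2/16) becomes 2 / n^5, which
  survives the loss of a factor n + 1 in passing to a uniform B-subset.\<close>
lemma level_density_large_component_le:
  assumes G: "is_graph V E" and n: "2 \<le> card V" and e: "0 < e" "e < 1"
  defines "K \<equiv> 96 * ln (real (card V)) / e^2"
  shows "level_density (\<lambda>S. K < real (largest_component_size E S)) V
      (sample_size (card V) (max_degree V E) e) \<le> 1 / card V"
proof -
  let ?n = "card V" and ?D = "max_degree V E" and ?Q = "\<lambda>S. K < real (largest_component_size E S)"
  let ?B = "sample_size ?n ?D e"
  have V: "finite V" using G unfolding is_graph_def by simp
  have K: "0 \<le> K" unfolding K_def using n by simp
  show ?thesis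
  proof (cases "?D = 0")
    case True
    then have "?B = 0" unfolding sample_size_def by simp
    moreover have "sat_subsets ?Q V 0 = {}"
      using K V finite_subset by (fastforce simp: sat_subsets_def largest_component_size_def)
    ultimately show ?thesis by (simp add: level_density_def)
  next
    case False
    define p where "p = (1 - e) / ?D"
    have p: "0 < p" "p < 1" unfolding p_def using e False by (simp_all add: divide_less_eq)
    have "real ?B \<le> real ?n * p"
      using sample_size_le[OF e, of ?n ?D] unfolding p_def by (simp add: mult.commute)
    then have "level_density ?Q V ?B \<le> (real ?n + 1) * bernoulli_prob p V ?Q"
      by (rule level_density_le_bernoulli_prob[OF V upward_closed_large_component[OF V] p])
    also have "\<dots> \<le> (real ?n + 1) * (2 * ?n / exp (K * e^2 / 16))"
      unfolding p_def using bernoulli_prob_large_component_le[OF G _ e K] False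
      by (intro mult_left_mono) simp_all
    also have "exp (K * e^2 / 16) = real ?n ^ 6"
    proof -
      have "K * e^2 / 16 = 6 * ln (real ?n)" unfolding K_def using e by simp
      then have "exp (K * e^2 / 16) = real ?n powr 6" using n by (simp add: powr_def)
      then show ?thesis using n by (simp add: powr_realpow)
    qed
    also have "(real ?n + 1) * (2 * ?n / real ?n ^ 6) \<le> 1 / ?n"
    proof -
      have "(real ?n + 1) * 2 * real ?n * real ?n \<le> 3 * real ?n ^ 3"
        using n by (simp add: power3_eq_cube)
      also have "\<dots> \<le> real ?n ^ 3 * real ?n ^ 3"
        using n power_mono[of 2 "real ?n" 3] by (intro mult_right_mono) simp_all
      finally show ?thesis using n by (simp add: field_simps flip: power_add)
    qed
    finally show ?thesis .
  qed
qed

lemma largest_component_whp: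
  assumes G: "is_graph V E" and n: "2 \<le> card V" and e: "0 < e" "e < 1"
  defines "K \<equiv> 96 * ln (real (card V)) / e\<^sup>2"
    and "B \<equiv> sample_size (card V) (max_degree V E) e"
  shows "1 - real (card V) powr - 1 \<le> measure_pmf.prob (pmf_of_set {S. S \<subseteq> V \<and> card S = B})
      {S. real (largest_component_size E S) \<le> K}"
    and "1 - real (card V) powr - 1 \<le> measure_pmf.prob (pmf_of_set (PiE {..<B} (\<lambda>_. V)))
      {f. real (largest_component_size E (f ` {..<B})) \<le> K}"
proof -
  let ?Q = "\<lambda>S. K < real (largest_component_size E S)"
  have V: "finite V" "V \<noteq> {}" using G n unfolding is_graph_def by auto
  have B: "B \<le> card V" unfolding B_def by (rule sample_size_le_card[OF e])
  have small: "level_density ?Q V B \<le> real (card V) powr - 1"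
    using level_density_large_component_le[OF G n e] n unfolding K_def B_def
    by (simp add: powr_minus_divide)
  have compl: "measure_pmf.prob M {x. real (largest_component_size E (f x)) \<le> K}
      = 1 - measure_pmf.prob M {x. ?Q (f x)}" for M :: "'a pmf" and f
    using measure_pmf.prob_compl[of "{x. ?Q (f x)}" M]
    by (simp add: not_less[symmetric] Compl_eq_Diff_UNIV[symmetric] Collect_neg_eq[symmetric])
  show "1 - real (card V) powr - 1 \<le> measure_pmf.prob (pmf_of_set {S. S \<subseteq> V \<and> card S = B})
      {S. real (largest_component_size E S) \<le> K}"
    using compl[of _ "\<lambda>S. S"] prob_uniform_subset_sat[OF V(1) B] small by simp
  have "measure_pmf.prob (pmf_of_set (PiE {..<B} (\<lambda>_. V))) {f. ?Q (f ` {..<B})}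
      \<le> level_density ?Q V B"
    using prob_uniform_tuple_sat_le[OF V finite_lessThan upward_closed_large_component[OF V(1)]] B
    by simp
  then show "1 - real (card V) powr - 1 \<le> measure_pmf.prob (pmf_of_set (PiE {..<B} (\<lambda>_. V)))
      {f. real (largest_component_size E (f ` {..<B})) \<le> K}"
    using compl[of _ "\<lambda>f. f ` {..<B}"] small by simp
qed

theorem theorem3:
  "\<exists>C::real. C > 0 \<and> (\<exists>\<zeta>::real. \<zeta> > 0 \<and> (\<exists>n0::nat.
     \<forall>(V::nat set) (E::nat \<Rightarrow> nat \<Rightarrow> bool) (\<epsilon>::real).
       is_graph V E \<longrightarrow> card V \<ge> n0 \<longrightarrow> 0 < \<epsilon> \<longrightarrow> \<epsilon> < 1 \<longrightarrow>
       (let n = card V;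
            B = sample_size n (max_degree V E) \<epsilon>;
            K = C * ln (real n) / \<epsilon>\<^sup>2
        in
          \<comment> \<open>without replacement: uniformly random B-subset of V\<close>
          measure_pmf.prob (pmf_of_set {S. S \<subseteq> V \<and> card S = B})
              {S. real (largest_component_size E S) \<le> K} \<ge> 1 - real n powr (-\<zeta>)
          \<and>
          \<comment> \<open>with replacement: B i.i.d. uniform vertices\<close>
          measure_pmf.prob (pmf_of_set (PiE {..<B} (\<lambda>_. V)))
              {f. real (largest_component_size E (f ` {..<B})) \<le> K} \<ge> 1 - real n powr (-\<zeta>))))"
proof -
  have "0 < (96::real)" "0 < (1::real)" by simp_all
  then show ?thesis unfolding Let_def using largest_component_whp by blast
qed

end
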